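(* With the notation of the context, the POVM $\{E_j\}_{j\in A}$ (on the support of $\Sigma=\sum_j\sigma_j$, completed arbitrarily on its orthogonal complement) maximizes the average success probability $\frac{1}{|A|}\sum_{j\in A}\mathrm{tr}(F_j\sigma_j)$ over all POVMs $\{F_j\}_{j\in A}$ for distinguishing the equiprobable states $\{\sigma_j\}_{j\in A}$.
   Context: $A$ finite abelian group, $p$ prime, $\varphi\in\mathrm{Aut}(A)$ with $\varphi^p=\mathrm{id}$, $|G|:=p|A|$, $k\ge1$. $\{\chi_x\}_{x\in A}$ are the characters of $A$ with $\chi_x\chi_{x'}=\chi_{x+x'}$, $\chi_x(y)=\chi_y(x)$. For $b\in\{0,\dots,p-1\}$, $\Phi_b:=\sum_{i=0}^{b-1}\varphi^i$ and $\hat\Phi_b:A\to A$ is a function with $\chi_x(\Phi_b(d))=\chi_{\hat\Phi_b(x)}(d)$ for all $x,d$. For $x\in A^k$, $b\in\mathbb{Z}_p^k$: $\hat\Phi_b(x):=\sum_j\hat\Phi_{b_j}(x_j)$, $S^x_w:=\{b:\hat\Phi_b(x)=w\}$, $\eta^x_w:=|S^x_w|$, $|S^x_w\rangle$ the normalized uniform superposition over $S^x_w$ (zero if empty). $\sigma_d:=\frac{1}{|G|^k}\sum_{x}\sum_{w,v}\chi_w(d)\overline{\chi_v(d)}\sqrt{\eta^x_w\eta^x_v}|x,S^x_w\rangle\langle x,S^x_v|$ and $E_j:=\frac{1}{|A|}\sum_x\sum_{w,v}\chi_w(j)\overline{\chi_v(j)}|x,S^x_w\rangle\langle x,S^x_v|$.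 *)

theory Defs
  imports "HOL-Analysis.Analysis"
begin

definition mmul :: "'i set \<Rightarrow> ('i \<Rightarrow> 'i \<Rightarrow> complex) \<Rightarrow> ('i \<Rightarrow> 'i \<Rightarrow> complex) \<Rightarrow> 'i \<Rightarrow> 'i \<Rightarrow> complex" where
  "mmul I M N = (\<lambda>i j. \<Sum>l\<in>I. M i l * N l j)"

definition mvec :: "'i set \<Rightarrow> ('i \<Rightarrow> 'i \<Rightarrow> complex) \<Rightarrow> ('i \<Rightarrow> complex) \<Rightarrow> 'i \<Rightarrow> complex" where
  "mvec I M v = (\<lambda>i. \<Sum>l\<in>I. M i l * v l)"

definition mtrace :: "'i set \<Rightarrow> ('i \<Rightarrow> 'i \<Rightarrow> complex) \<Rightarrow> complex" where
  "mtrace I M = (\<Sum>i\<in>I. M i i)"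

definition outer :: "('i \<Rightarrow> complex) \<Rightarrow> ('i \<Rightarrow> complex) \<Rightarrow> 'i \<Rightarrow> 'i \<Rightarrow> complex" where
  "outer u v = (\<lambda>i j. u i * cnj (v j))"

definition hermitian :: "'i set \<Rightarrow> ('i \<Rightarrow> 'i \<Rightarrow> complex) \<Rightarrow> bool" where
  "hermitian I M \<longleftrightarrow> (\<forall>i\<in>I. \<forall>j\<in>I. M j i = cnj (M i j))"

definition psd :: "'i set \<Rightarrow> ('i \<Rightarrow> 'i \<Rightarrow> complex) \<Rightarrow> bool" where
  "psd I M \<longleftrightarrow> (\<forall>v. (\<Sum>i\<in>I. \<Sum>j\<in>I. cnj (v i) * M i j * v j) \<in> \<real>
                  \<and> 0 \<le> Re (\<Sum>i\<in>I. \<Sum>j\<in>I. cnj (v i) * M i j * v j))"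

definition povm :: "'i set \<Rightarrow> 'j set \<Rightarrow> ('j \<Rightarrow> 'i \<Rightarrow> 'i \<Rightarrow> complex) \<Rightarrow> bool" where
  "povm I J F \<longleftrightarrow> (\<forall>j\<in>J. psd I (F j)) \<and>
     (\<forall>a\<in>I. \<forall>b\<in>I. (\<Sum>j\<in>J. F j a b) = (if a = b then 1 else 0))"

text \<open>Q is the orthogonal projector onto the kernel of S (= orthogonal complement of the
  support of the Hermitian operator S).\<close>
definition proj_onto_kernel :: "'i set \<Rightarrow> ('i \<Rightarrow> 'i \<Rightarrow> complex) \<Rightarrow> ('i \<Rightarrow> 'i \<Rightarrow> complex) \<Rightarrow> bool" where
  "proj_onto_kernel I S Q \<longleftrightarrow> hermitian I Q \<and>
     (\<forall>a\<in>I. \<forall>b\<in>I. mmul I Q Q a b = Q a b) \<and>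
     (\<forall>v. (\<forall>a\<in>I. mvec I S v a = 0) \<longleftrightarrow> (\<forall>a\<in>I. mvec I Q v a = v a))"

definition character :: "('a::ab_group_add \<Rightarrow> complex) \<Rightarrow> bool" where
  "character f \<longleftrightarrow> (\<forall>a b. f (a + b) = f a * f b) \<and> (\<forall>a. norm (f a) = 1)"

definition Phi :: "('a::ab_group_add \<Rightarrow> 'a) \<Rightarrow> nat \<Rightarrow> 'a \<Rightarrow> 'a" where
  "Phi phi b d = (\<Sum>i<b. (phi ^^ i) d)"

text \<open>Basis of the Hilbert space: pairs (x,b) with x \<in> A^k, b \<in> Z_p^k.\<close>
definition Xs :: "nat \<Rightarrow> (nat \<Rightarrow> 'a::finite) set" where
  "Xs k = PiE {..<k} (\<lambda>_. UNIV)"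

definition Bs :: "nat \<Rightarrow> nat \<Rightarrow> (nat \<Rightarrow> nat) set" where
  "Bs p k = PiE {..<k} (\<lambda>_. {..<p})"

definition Idx :: "nat \<Rightarrow> nat \<Rightarrow> ((nat \<Rightarrow> 'a::finite) \<times> (nat \<Rightarrow> nat)) set" where
  "Idx p k = Xs k \<times> Bs p k"

definition hatPhiv :: "(nat \<Rightarrow> 'a::ab_group_add \<Rightarrow> 'a) \<Rightarrow> nat \<Rightarrow> (nat \<Rightarrow> nat) \<Rightarrow> (nat \<Rightarrow> 'a) \<Rightarrow> 'a" where
  "hatPhiv Phihat k b x = (\<Sum>j<k. Phihat (b j) (x j))"

definition Sset :: "(nat \<Rightarrow> 'a::{finite,ab_group_add} \<Rightarrow> 'a) \<Rightarrow> nat \<Rightarrow> nat \<Rightarrow> (nat \<Rightarrow> 'a) \<Rightarrow> 'a \<Rightarrow> (nat \<Rightarrow> nat) set" where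
  "Sset Phihat p k x w = {b \<in> Bs p k. hatPhiv Phihat k b x = w}"

definition eta :: "(nat \<Rightarrow> 'a::{finite,ab_group_add} \<Rightarrow> 'a) \<Rightarrow> nat \<Rightarrow> nat \<Rightarrow> (nat \<Rightarrow> 'a) \<Rightarrow> 'a \<Rightarrow> nat" where
  "eta Phihat p k x w = card (Sset Phihat p k x w)"

text \<open>|x, S^x_w>: normalized uniform superposition (zero if S^x_w is empty).\<close>
definition ketS :: "(nat \<Rightarrow> 'a::{finite,ab_group_add} \<Rightarrow> 'a) \<Rightarrow> nat \<Rightarrow> nat \<Rightarrow> (nat \<Rightarrow> 'a) \<Rightarrow> 'a
     \<Rightarrow> ((nat \<Rightarrow> 'a) \<times> (nat \<Rightarrow> nat)) \<Rightarrow> complex" where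
  "ketS Phihat p k x w = (\<lambda>(y, c). if y = x \<and> c \<in> Sset Phihat p k x w
        then complex_of_real (1 / sqrt (real (eta Phihat p k x w))) else 0)"

definition sigma :: "('a::{finite,ab_group_add} \<Rightarrow> 'a \<Rightarrow> complex) \<Rightarrow> (nat \<Rightarrow> 'a \<Rightarrow> 'a) \<Rightarrow> nat \<Rightarrow> nat \<Rightarrow> 'a
     \<Rightarrow> ((nat \<Rightarrow> 'a) \<times> (nat \<Rightarrow> nat)) \<Rightarrow> ((nat \<Rightarrow> 'a) \<times> (nat \<Rightarrow> nat)) \<Rightarrow> complex" where
  "sigma chi Phihat p k d = (\<lambda>i j. (1 / (of_nat (p * CARD('a)) ^ k)) *
     (\<Sum>x\<in>Xs k. \<Sum>w\<in>UNIV. \<Sum>v\<in>UNIV. chi w d * cnj (chi v d) *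
        complex_of_real (sqrt (real (eta Phihat p k x w) * real (eta Phihat p k x v))) *
        outer (ketS Phihat p k x w) (ketS Phihat p k x v) i j))"

definition Eop :: "('a::{finite,ab_group_add} \<Rightarrow> 'a \<Rightarrow> complex) \<Rightarrow> (nat \<Rightarrow> 'a \<Rightarrow> 'a) \<Rightarrow> nat \<Rightarrow> nat \<Rightarrow> 'a
     \<Rightarrow> ((nat \<Rightarrow> 'a) \<times> (nat \<Rightarrow> nat)) \<Rightarrow> ((nat \<Rightarrow> 'a) \<times> (nat \<Rightarrow> nat)) \<Rightarrow> complex" where
  "Eop chi Phihat p k j = (\<lambda>a b. (1 / of_nat CARD('a)) *
     (\<Sum>x\<in>Xs k. \<Sum>w\<in>UNIV. \<Sum>v\<in>UNIV. chi w j * cnj (chi v j) *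
        outer (ketS Phihat p k x w) (ketS Phihat p k x v) a b))"

definition avg_success :: "('a::{finite,ab_group_add} \<Rightarrow> 'a \<Rightarrow> complex) \<Rightarrow> (nat \<Rightarrow> 'a \<Rightarrow> 'a) \<Rightarrow> nat \<Rightarrow> nat
     \<Rightarrow> ('a \<Rightarrow> ((nat \<Rightarrow> 'a) \<times> (nat \<Rightarrow> nat)) \<Rightarrow> ((nat \<Rightarrow> 'a) \<times> (nat \<Rightarrow> nat)) \<Rightarrow> complex) \<Rightarrow> real" where
  "avg_success chi Phihat p k F =
     Re ((1 / of_nat CARD('a)) * (\<Sum>j\<in>UNIV. mtrace (Idx p k) (mmul (Idx p k) (F j) (sigma chi Phihat p k j))))"

end

theory Submission
  imports Defs
begin

text \<open>
  For x in A^k and j in A let g_x_j be the vector with entry chi_w(j) at the basis vector (x, b),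
  where w = hatPhi_b(x), and entry 0 at the basis vectors (y, b) with y ~= x. Then
  sigma_j = |G|^-k sum_x |g_x_j><g_x_j|, so the success probability of a POVM F is a sum of the
  quadratic forms <g_x_j|F_j|g_x_j>. On the cell {x} * S^x_w the vector g_x_j is chi_w(j) sqrt(eta^x_w)
  times a unit vector; convexity of the quadratic form of F_j >= 0 together with sum_j F_j = 1 bounds
  sum_j <g_x_j|F_j|g_x_j> by (sum_w sqrt(eta^x_w))^2. The measurement E attains this bound, and G
  contributes nothing because g_x_j lies in the support of Sigma. By character orthogonality Sigma is
  a multiple of the all-ones matrix on each cell, so sum_j E_j is the projector onto the support of
  Sigma and E + G is a POVM.
\<close>

section \<open>Sesquilinear forms and POVMs\<close>

definition sesq :: "'i set \<Rightarrow> ('i \<Rightarrow> 'i \<Rightarrow> complex) \<Rightarrow> ('i \<Rightarrow> complex) \<Rightarrow> ('i \<Rightarrow> complex) \<Rightarrow> complex" where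
  "sesq I M u v = (\<Sum>a\<in>I. \<Sum>b\<in>I. cnj (u a) * M a b * v b)"

definition gram :: "'t set \<Rightarrow> ('t \<Rightarrow> 'i \<Rightarrow> complex) \<Rightarrow> 'i \<Rightarrow> 'i \<Rightarrow> complex" where
  "gram T u = (\<lambda>a b. \<Sum>t\<in>T. u t a * cnj (u t b))"

lemma sum_swap3: "(\<Sum>a\<in>A. \<Sum>b\<in>B. \<Sum>t\<in>T. f a b t) = (\<Sum>t\<in>T. \<Sum>a\<in>A. \<Sum>b\<in>B. f a b t)"
proof -
  have "(\<Sum>a\<in>A. \<Sum>b\<in>B. \<Sum>t\<in>T. f a b t) = (\<Sum>a\<in>A. \<Sum>t\<in>T. \<Sum>b\<in>B. f a b t)"
    by (rule sum.cong[OF refl sum.swap])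
  then show ?thesis by (simp only: sum.swap[of _ A T])
qed

lemma psd_iff_sesq: "psd I M \<longleftrightarrow> (\<forall>v. sesq I M v v \<in> \<real> \<and> 0 \<le> Re (sesq I M v v))"
  unfolding psd_def sesq_def ..

lemma psd_sesq_nonneg: "psd I M \<Longrightarrow> 0 \<le> Re (sesq I M v v)"
  unfolding psd_iff_sesq by blast

lemma sesq_cong:
  "(\<And>a b. a \<in> I \<Longrightarrow> b \<in> I \<Longrightarrow> M a b = M' a b) \<Longrightarrow> (\<And>a. a \<in> I \<Longrightarrow> u a = u' a)
    \<Longrightarrow> (\<And>a. a \<in> I \<Longrightarrow> v a = v' a) \<Longrightarrow> sesq I M u v = sesq I M' u' v'"
  unfolding sesq_def by (intro sum.cong) auto

lemma sesq_add_matrix: "sesq I (\<lambda>a b. M a b + N a b) u v = sesq I M u v + sesq I N u v"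
  unfolding sesq_def by (simp add: distrib_left distrib_right sum.distrib)

lemma sesq_scale: "sesq I M (\<lambda>a. c * u a) (\<lambda>a. c * v a) = cnj c * c * sesq I M u v"
  unfolding sesq_def by (simp add: sum_distrib_left mult_ac)

lemma sesq_diff:
  "sesq I M (\<lambda>a. u a - v a) (\<lambda>a. u a - v a) = sesq I M u u + sesq I M v v - sesq I M u v - sesq I M v u"
proof -
  have "cnj (u a - v a) * M a b * (u b - v b)
      = cnj (u a) * M a b * u b + cnj (v a) * M a b * v b - cnj (u a) * M a b * v b - cnj (v a) * M a b * u b"
    for a b by (simp add: algebra_simps)
  then show ?thesis unfolding sesq_def by (simp add: sum.distrib sum_subtractf)
qed

lemma sesq_sum_right:
  "sesq I M u (\<lambda>b. \<Sum>t\<in>T. w t * e t b) = (\<Sum>t\<in>T. w t * sesq I M u (e t))"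
proof -
  have "sesq I M u (\<lambda>b. \<Sum>t\<in>T. w t * e t b) = (\<Sum>a\<in>I. \<Sum>b\<in>I. \<Sum>t\<in>T. w t * (cnj (u a) * M a b * e t b))"
    unfolding sesq_def sum_distrib_left by (simp add: mult_ac)
  also have "\<dots> = (\<Sum>t\<in>T. \<Sum>a\<in>I. \<Sum>b\<in>I. w t * (cnj (u a) * M a b * e t b))"
    by (rule sum_swap3)
  finally show ?thesis by (simp add: sesq_def sum_distrib_left)
qed

lemma sesq_sum_left:
  "sesq I M (\<lambda>a. \<Sum>s\<in>S. w s * e s a) v = (\<Sum>s\<in>S. cnj (w s) * sesq I M (e s) v)"
proof -
  have "sesq I M (\<lambda>a. \<Sum>s\<in>S. w s * e s a) v = (\<Sum>a\<in>I. \<Sum>b\<in>I. \<Sum>s\<in>S. cnj (w s) * (cnj (e s a) * M a b * v b))"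
    unfolding sesq_def cnj_sum sum_distrib_left sum_distrib_right by (simp add: mult_ac)
  also have "\<dots> = (\<Sum>s\<in>S. \<Sum>a\<in>I. \<Sum>b\<in>I. cnj (w s) * (cnj (e s a) * M a b * v b))"
    by (rule sum_swap3)
  finally show ?thesis by (simp add: sesq_def sum_distrib_left)
qed

lemma psd_add: "psd I A \<Longrightarrow> psd I B \<Longrightarrow> psd I (\<lambda>a b. A a b + B a b)"
  unfolding psd_iff_sesq sesq_add_matrix by simp

lemma sesq_gram:
  assumes "finite I"
  shows "sesq I (gram T u) v v = of_real (\<Sum>t\<in>T. (cmod (\<Sum>a\<in>I. cnj (v a) * u t a))\<^sup>2)"
proof -
  have "cnj (v a) * gram T u a b * v b = (\<Sum>t\<in>T. (cnj (v a) * u t a) * cnj (cnj (v b) * u t b))" for a b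
    unfolding gram_def sum_distrib_left sum_distrib_right by (simp add: mult_ac)
  then have "sesq I (gram T u) v v = (\<Sum>a\<in>I. \<Sum>b\<in>I. \<Sum>t\<in>T. (cnj (v a) * u t a) * cnj (cnj (v b) * u t b))"
    unfolding sesq_def by simp
  also have "\<dots> = (\<Sum>t\<in>T. (\<Sum>a\<in>I. cnj (v a) * u t a) * cnj (\<Sum>b\<in>I. cnj (v b) * u t b))"
    unfolding cnj_sum sum_product by (rule sum_swap3)
  also have "\<dots> = (\<Sum>t\<in>T. of_real ((cmod (\<Sum>a\<in>I. cnj (v a) * u t a))\<^sup>2))"
    by (simp only: complex_norm_square)
  finally show ?thesis by simp
qed

lemma sesq_scaled_gram:
  assumes "finite I" "\<And>a b. a \<in> I \<Longrightarrow> b \<in> I \<Longrightarrow> M a b = of_real r * gram T u a b"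
  shows "sesq I M v v = of_real (r * (\<Sum>t\<in>T. (cmod (\<Sum>a\<in>I. cnj (v a) * u t a))\<^sup>2))"
proof -
  have "sesq I M v v = of_real r * sesq I (gram T u) v v"
    unfolding sesq_def by (simp add: assms(2) sum_distrib_left mult_ac)
  then show ?thesis by (simp add: sesq_gram[OF assms(1)])
qed

lemma psd_scaled_gram:
  assumes "finite I" "0 \<le> r" "\<And>a b. a \<in> I \<Longrightarrow> b \<in> I \<Longrightarrow> M a b = of_real r * gram T u a b"
  shows "psd I M"
  unfolding psd_iff_sesq using sesq_scaled_gram[OF assms(1,3)] assms(2) by (simp add: sum_nonneg)

lemma mtrace_mmul_scaled_gram:
  assumes "\<And>a b. a \<in> I \<Longrightarrow> b \<in> I \<Longrightarrow> M a b = c * gram T u a b"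
  shows "mtrace I (mmul I F M) = c * (\<Sum>t\<in>T. sesq I F (u t) (u t))"
proof -
  have "mtrace I (mmul I F M) = (\<Sum>a\<in>I. \<Sum>b\<in>I. \<Sum>t\<in>T. c * (cnj (u t a) * F a b * u t b))"
    unfolding mtrace_def mmul_def gram_def using assms
    by (intro sum.cong refl) (simp add: gram_def sum_distrib_left mult_ac)
  also have "\<dots> = (\<Sum>t\<in>T. \<Sum>a\<in>I. \<Sum>b\<in>I. c * (cnj (u t a) * F a b * u t b))"
    by (rule sum_swap3)
  finally show ?thesis unfolding sesq_def by (simp add: sum_distrib_left)
qed

text \<open>
  The right-hand side minus the left-hand side is
  1/2 sum_s sum_t w s * w t * Re (sesq I M (e s - e t) (e s - e t)).
\<close>

lemma sesq_convex:
  fixes w :: "'t \<Rightarrow> real"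
  assumes psdM: "psd I M" and w_nonneg: "\<And>t. t \<in> T \<Longrightarrow> 0 \<le> w t"
  shows "Re (sesq I M (\<lambda>a. \<Sum>t\<in>T. of_real (w t) * e t a) (\<lambda>a. \<Sum>t\<in>T. of_real (w t) * e t a))
       \<le> (\<Sum>t\<in>T. w t) * (\<Sum>t\<in>T. w t * Re (sesq I M (e t) (e t)))"
    (is "?lhs \<le> ?rhs")
proof -
  define q where "q s t = Re (sesq I M (e s) (e t))" for s t
  have lhs: "?lhs = (\<Sum>s\<in>T. \<Sum>t\<in>T. w s * w t * q s t)"
    unfolding sesq_sum_left sesq_sum_right q_def by (simp add: sum_distrib_left mult_ac)
  have rhs: "?rhs = (\<Sum>s\<in>T. \<Sum>t\<in>T. w s * w t * q t t)"
    unfolding sum_product q_def by (simp add: mult_ac)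
  have "0 \<le> (\<Sum>s\<in>T. \<Sum>t\<in>T. w s * w t * Re (sesq I M (\<lambda>a. e s a - e t a) (\<lambda>a. e s a - e t a)))"
    by (intro sum_nonneg mult_nonneg_nonneg w_nonneg psd_sesq_nonneg[OF psdM])
  also have "\<dots> = (\<Sum>s\<in>T. \<Sum>t\<in>T. w s * w t * q s s) + (\<Sum>s\<in>T. \<Sum>t\<in>T. w s * w t * q t t)
      - (\<Sum>s\<in>T. \<Sum>t\<in>T. w s * w t * q s t) - (\<Sum>s\<in>T. \<Sum>t\<in>T. w s * w t * q t s)"
    unfolding sesq_diff q_def by (simp add: algebra_simps sum.distrib sum_subtractf)
  also have "(\<Sum>s\<in>T. \<Sum>t\<in>T. w s * w t * q s s) = (\<Sum>s\<in>T. \<Sum>t\<in>T. w s * w t * q t t)"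
    by (subst sum.swap) (simp add: mult_ac)
  also have "(\<Sum>s\<in>T. \<Sum>t\<in>T. w s * w t * q t s) = (\<Sum>s\<in>T. \<Sum>t\<in>T. w s * w t * q s t)"
    by (subst sum.swap) (simp add: mult_ac)
  finally show ?thesis unfolding lhs rhs by simp
qed

lemma povm_sum_sesq:
  assumes "povm I J F" "finite I"
  shows "(\<Sum>j\<in>J. sesq I (F j) v v) = of_real (\<Sum>a\<in>I. (cmod (v a))\<^sup>2)"
proof -
  have "(\<Sum>j\<in>J. sesq I (F j) v v) = (\<Sum>a\<in>I. \<Sum>b\<in>I. cnj (v a) * (\<Sum>j\<in>J. F j a b) * v b)"
    unfolding sesq_def sum_distrib_left sum_distrib_right by (rule sum_swap3[symmetric])
  also have "\<dots> = (\<Sum>a\<in>I. cnj (v a) * v a)"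
    using assms by (simp add: povm_def if_distrib[of "\<lambda>z. _ * z * _"] cong: if_cong)
  also have "\<dots> = (\<Sum>a\<in>I. of_real ((cmod (v a))\<^sup>2))"
    by (simp only: complex_norm_square mult.commute)
  finally show ?thesis by (simp only: of_real_sum)
qed

lemma povm_superposition_bound:
  fixes w :: "'t \<Rightarrow> real"
  assumes povm: "povm I J F" and fin: "finite I"
    and w_nonneg: "\<And>t. t \<in> T \<Longrightarrow> 0 \<le> w t"
    and phase: "\<And>j t. j \<in> J \<Longrightarrow> t \<in> T \<Longrightarrow> cmod (c j t) = 1"
    and unit: "\<And>t. t \<in> T \<Longrightarrow> (\<Sum>a\<in>I. (cmod (r t a))\<^sup>2) = 1"
    and g: "\<And>j a. j \<in> J \<Longrightarrow> a \<in> I \<Longrightarrow> g j a = (\<Sum>t\<in>T. of_real (w t) * (c j t * r t a))"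
  shows "(\<Sum>j\<in>J. Re (sesq I (F j) (g j) (g j))) \<le> (\<Sum>t\<in>T. w t)\<^sup>2"
proof -
  have "Re (sesq I (F j) (g j) (g j)) \<le> (\<Sum>t\<in>T. w t) * (\<Sum>t\<in>T. w t * Re (sesq I (F j) (r t) (r t)))"
    if j: "j \<in> J" for j
  proof -
    have psd: "psd I (F j)" using povm j unfolding povm_def by blast
    have "sesq I (F j) (g j) (g j)
        = sesq I (F j) (\<lambda>a. \<Sum>t\<in>T. of_real (w t) * (c j t * r t a)) (\<lambda>a. \<Sum>t\<in>T. of_real (w t) * (c j t * r t a))"
      using g j by (intro sesq_cong) auto
    then have "Re (sesq I (F j) (g j) (g j))
        \<le> (\<Sum>t\<in>T. w t) * (\<Sum>t\<in>T. w t * Re (sesq I (F j) (\<lambda>a. c j t * r t a) (\<lambda>a. c j t * r t a)))"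
      using sesq_convex[where T=T and w=w and e="\<lambda>t a. c j t * r t a", OF psd w_nonneg] by simp
    also have "(\<Sum>t\<in>T. w t * Re (sesq I (F j) (\<lambda>a. c j t * r t a) (\<lambda>a. c j t * r t a)))
        = (\<Sum>t\<in>T. w t * Re (sesq I (F j) (r t) (r t)))"
      using phase[OF j] by (intro sum.cong refl) (simp add: sesq_scale complex_norm_square[symmetric] mult.commute)
    finally show ?thesis .
  qed
  then have "(\<Sum>j\<in>J. Re (sesq I (F j) (g j) (g j)))
      \<le> (\<Sum>j\<in>J. (\<Sum>t\<in>T. w t) * (\<Sum>t\<in>T. w t * Re (sesq I (F j) (r t) (r t))))"
    by (rule sum_mono)
  also have "\<dots> = (\<Sum>t\<in>T. w t) * (\<Sum>t\<in>T. w t * Re (\<Sum>j\<in>J. sesq I (F j) (r t) (r t)))"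
    by (simp add: sum_distrib_left sum.swap[of _ J])
  also have "\<dots> = (\<Sum>t\<in>T. w t) * (\<Sum>t\<in>T. w t)"
    by (simp add: povm_sum_sesq[OF povm fin] unit cong: sum.cong)
  also have "\<dots> = (\<Sum>t\<in>T. w t)\<^sup>2"
    by (rule power2_eq_square[symmetric])
  finally show ?thesis .
qed

section \<open>Matrices that are constant on the blocks of a partition\<close>

definition class_card :: "'i set \<Rightarrow> ('i \<Rightarrow> 'c) \<Rightarrow> 'i \<Rightarrow> nat" where
  "class_card I cl a = card {l\<in>I. cl l = cl a}"

lemma class_card_pos: "finite I \<Longrightarrow> a \<in> I \<Longrightarrow> 0 < class_card I cl a"
  unfolding class_card_def by (subst card_gt_0_iff) auto

lemma class_card_cong: "cl l = cl a \<Longrightarrow> class_card I cl l = class_card I cl a"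
  unfolding class_card_def by simp

lemma sum_class_const:
  assumes "finite I" "a \<in> I" "\<And>l. l \<in> I \<Longrightarrow> cl l = cl a \<Longrightarrow> f l = f a"
  shows "(\<Sum>l\<in>{l\<in>I. cl l = cl a}. f l) = of_nat (class_card I cl a) * f a"
proof -
  have "(\<Sum>l\<in>{l\<in>I. cl l = cl a}. f l) = (\<Sum>l\<in>{l\<in>I. cl l = cl a}. f a)"
    using assms(3) by (intro sum.cong) auto
  then show ?thesis by (simp add: class_card_def)
qed

context
  fixes I :: "'i set" and cl :: "'i \<Rightarrow> 'c" and S :: "'i \<Rightarrow> 'i \<Rightarrow> complex" and \<kappa> :: complex
  assumes fin: "finite I"
    and S_block: "\<And>a b. a \<in> I \<Longrightarrow> b \<in> I \<Longrightarrow> S a b = (if cl a = cl b then \<kappa> else 0)"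
    and \<kappa>_nz: "\<kappa> \<noteq> 0"
begin

lemma block_kernel_iff:
  "(\<forall>a\<in>I. mvec I S v a = 0) \<longleftrightarrow> (\<forall>a\<in>I. (\<Sum>l\<in>{l\<in>I. cl l = cl a}. v l) = 0)"
proof -
  have "mvec I S v a = \<kappa> * (\<Sum>l\<in>{l\<in>I. cl l = cl a}. v l)" if "a \<in> I" for a
    unfolding mvec_def sum.inter_filter[OF fin] sum_distrib_left
    using that by (intro sum.cong refl) (auto simp: S_block)
  then show ?thesis using \<kappa>_nz by simp
qed

lemma class_const_orth_kernel:
  assumes v: "\<forall>a\<in>I. mvec I S v a = 0"
    and f: "\<And>a l. a \<in> I \<Longrightarrow> l \<in> I \<Longrightarrow> cl l = cl a \<Longrightarrow> f l = f a"
  shows "(\<Sum>a\<in>I. f a * v a) = 0"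
proof -
  define h where "h a = (of_nat (class_card I cl a) :: complex)" for a
  have avg: "(\<Sum>l\<in>{l\<in>I. cl l = cl a}. f l / h l) = f a" if "a \<in> I" for a
  proof -
    have "(\<Sum>l\<in>{l\<in>I. cl l = cl a}. f l / h l) = h a * (f a / h a)"
      unfolding h_def
    proof (rule sum_class_const[OF fin that])
      fix l assume "l \<in> I" "cl l = cl a"
      then show "f l / of_nat (class_card I cl l) = f a / of_nat (class_card I cl a)"
        using f[OF that] class_card_cong[of cl l a] by simp
    qed
    then show ?thesis using class_card_pos[OF fin that, of cl] by (simp add: h_def)
  qed
  have "(\<Sum>a\<in>I. f a * v a) = (\<Sum>a\<in>I. \<Sum>l\<in>I. if cl l = cl a then f l / h l * v a else 0)"
  proof (intro sum.cong refl)
    fix a assume "a \<in> I"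
    then have "f a * v a = (\<Sum>l\<in>{l\<in>I. cl l = cl a}. f l / h l) * v a"
      by (simp only: avg)
    then show "f a * v a = (\<Sum>l\<in>I. if cl l = cl a then f l / h l * v a else 0)"
      by (simp add: sum.inter_filter[OF fin] sum_distrib_right if_distrib[of "\<lambda>z. z * v a"] cong: if_cong)
  qed
  also have "\<dots> = (\<Sum>l\<in>I. \<Sum>a\<in>I. if cl l = cl a then f l / h l * v a else 0)"
    by (rule sum.swap)
  also have "\<dots> = (\<Sum>l\<in>I. f l / h l * (\<Sum>a\<in>{a\<in>I. cl a = cl l}. v a))"
    unfolding sum.inter_filter[OF fin] sum_distrib_left by (intro sum.cong refl) auto
  also have "\<dots> = 0"
    using v by (simp add: block_kernel_iff)
  finally show ?thesis .
qed

lemma proj_onto_kernel_row_class_sum: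
  assumes Q: "proj_onto_kernel I S Q" and a: "a \<in> I"
  shows "(\<Sum>l\<in>I. if cl l = cl b then Q a l else 0) = 0"
proof -
  have herm: "hermitian I Q" and idem: "\<forall>a\<in>I. \<forall>b\<in>I. mmul I Q Q a b = Q a b"
    and ker: "\<And>v. (\<forall>a\<in>I. mvec I S v a = 0) \<longleftrightarrow> (\<forall>a\<in>I. mvec I Q v a = v a)"
    using Q unfolding proj_onto_kernel_def by blast+
  have "\<forall>m\<in>I. mvec I Q (\<lambda>l. Q l a) m = Q m a"
    using idem a unfolding mvec_def mmul_def by auto
  then have "\<forall>m\<in>I. mvec I S (\<lambda>l. Q l a) m = 0"
    using ker by blast
  then have col: "(\<Sum>l\<in>I. (if cl l = cl b then 1 else 0) * Q l a) = 0"
    by (rule class_const_orth_kernel) auto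
  have "(\<Sum>l\<in>I. if cl l = cl b then Q a l else 0) = cnj (\<Sum>l\<in>I. (if cl l = cl b then 1 else 0) * Q l a)"
  proof (unfold cnj_sum, intro sum.cong refl)
    fix l assume "l \<in> I"
    then have "Q a l = cnj (Q l a)" using herm a unfolding hermitian_def by blast
    then show "(if cl l = cl b then Q a l else 0) = cnj ((if cl l = cl b then 1 else 0) * Q l a)"
      by simp
  qed
  then show ?thesis
    by (simp only: col complex_cnj_zero)
qed

text \<open>The unit vector at b minus its average over the class of b lies in the kernel of S, so Q fixes it.\<close>
lemma proj_onto_kernel_block:
  assumes Q: "proj_onto_kernel I S Q" and a: "a \<in> I" and b: "b \<in> I"
  shows "Q a b = (if a = b then 1 else 0) - (if cl a = cl b then 1 / of_nat (class_card I cl b) else 0)"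
proof -
  have ker: "\<And>v. (\<forall>a\<in>I. mvec I S v a = 0) \<longleftrightarrow> (\<forall>a\<in>I. mvec I Q v a = v a)"
    using Q unfolding proj_onto_kernel_def by blast
  define h where "h = class_card I cl b"
  have h_pos: "0 < h" unfolding h_def using class_card_pos[OF fin b] .
  define r :: "'i \<Rightarrow> complex" where "r l = (if l = b then 1 else 0) - (if cl l = cl b then 1 / of_nat h else 0)" for l
  have "(\<Sum>l\<in>{l\<in>I. cl l = cl m}. r l) = 0" if "m \<in> I" for m
  proof (cases "cl m = cl b")
    case True
    have "(\<Sum>l\<in>{l\<in>I. cl l = cl m}. r l) = (\<Sum>l\<in>{l\<in>I. cl l = cl b}. (if l = b then 1 else 0) - 1 / of_nat h)"
      unfolding r_def True by (intro sum.cong refl) auto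
    also have "\<dots> = 1 - of_nat h * (1 / of_nat h)"
      unfolding sum_subtractf using fin b by (simp add: h_def class_card_def)
    also have "\<dots> = 0"
      using h_pos by simp
    finally show ?thesis .
  next
    case False
    then show ?thesis unfolding r_def by (intro sum.neutral) auto
  qed
  then have "\<forall>m\<in>I. mvec I S r m = 0"
    by (simp add: block_kernel_iff)
  then have "mvec I Q r a = r a"
    using ker[of r] a by blast
  moreover have "mvec I Q r a = (\<Sum>l\<in>I. if l = b then Q a l else 0) - (\<Sum>l\<in>I. if cl l = cl b then Q a l else 0) / of_nat h"
    unfolding mvec_def r_def sum_divide_distrib sum_subtractf[symmetric]
    by (intro sum.cong refl) (simp add: right_diff_distrib)
  ultimately show ?thesis
    using proj_onto_kernel_row_class_sum[OF Q a] fin b unfolding r_def h_def by simp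
qed

lemma sesq_kernel_class_const:
  assumes G: "\<And>a b. a \<in> I \<Longrightarrow> b \<in> I \<Longrightarrow> mmul I S G a b = 0"
    and g: "\<And>a l. a \<in> I \<Longrightarrow> l \<in> I \<Longrightarrow> cl l = cl a \<Longrightarrow> g l = g a"
  shows "sesq I G g g = 0"
proof -
  have col: "(\<Sum>a\<in>I. cnj (g a) * G a b) = 0" if b: "b \<in> I" for b
  proof (rule class_const_orth_kernel)
    show "\<forall>a\<in>I. mvec I S (\<lambda>a. G a b) a = 0"
      using G b by (simp add: mvec_def mmul_def)
    show "cnj (g l) = cnj (g a)" if "a \<in> I" "l \<in> I" "cl l = cl a" for a l
      using g[OF that] by simp
  qed
  have "sesq I G g g = (\<Sum>b\<in>I. (\<Sum>a\<in>I. cnj (g a) * G a b) * g b)"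
    unfolding sesq_def sum_distrib_right by (rule sum.swap)
  then show ?thesis
    using col by simp
qed

end

section \<open>Characters\<close>

context
  fixes chi :: "'a::{finite,ab_group_add} \<Rightarrow> 'a \<Rightarrow> complex"
  assumes chars: "bij_betw chi UNIV {f. character f}"
    and chi_mult: "\<And>x x' y. chi x y * chi x' y = chi (x + x') y"
    and chi_sym: "\<And>x y. chi x y = chi y x"
begin

lemma norm_chi: "cmod (chi w d) = 1"
proof -
  have "character (chi w)" using bij_betwE[OF chars] by blast
  then show ?thesis unfolding character_def by blast
qed

lemma cnj_chi_mult_self: "cnj (chi w d) * chi w d = 1"
  using complex_norm_square[of "chi w d"] norm_chi[of w d] by (simp add: mult.commute)

lemma chi_zero: "chi 0 d = 1"
proof -
  have "chi 0 d * chi 0 d = chi 0 d" using chi_mult[where x=0 and x'=0 and y=d] by simp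
  moreover have "chi 0 d \<noteq> 0" using norm_chi[of 0 d] by auto
  ultimately show ?thesis by simp
qed

lemma chi_mult_cnj: "chi w d * cnj (chi v d) = chi (w - v) d"
proof -
  have "chi v d * chi (- v) d = chi (v + - v) d" by (rule chi_mult)
  then have inv: "chi v d * chi (- v) d = 1" by (simp add: chi_zero)
  have "cnj (chi v d) = cnj (chi v d) * (chi v d * chi (- v) d)" by (simp add: inv)
  also have "\<dots> = chi (- v) d" by (simp add: mult.assoc[symmetric] cnj_chi_mult_self)
  finally have "chi w d * cnj (chi v d) = chi (w + - v) d" by (simp add: chi_mult)
  then show ?thesis by simp
qed

lemma chi_orthogonality: "(\<Sum>d\<in>UNIV. chi w d * cnj (chi v d)) = (if w = v then of_nat CARD('a) else 0)"
proof (cases "w = v")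
  case True
  then show ?thesis by (simp add: chi_mult_cnj chi_zero)
next
  case False
  define u where "u = w - v"
  have "chi u \<noteq> chi 0"
    using False bij_betw_imp_inj_on[OF chars] unfolding u_def by (metis injD right_minus_eq)
  then obtain y where y: "chi u y \<noteq> 1"
    using chi_zero by fastforce
  have "(\<Sum>d\<in>UNIV. chi u d) = (\<Sum>d\<in>UNIV. chi u (y + d))"
    by (rule sum.reindex_bij_witness[where i="\<lambda>d. y + d" and j="\<lambda>d. d - y"]) (auto simp: algebra_simps)
  also have "\<dots> = chi u y * (\<Sum>d\<in>UNIV. chi u d)"
  proof -
    have "chi u (y + d) = chi u y * chi u d" for d
      using chi_sym chi_mult by metis
    then show ?thesis by (simp add: sum_distrib_left)
  qed
  finally have "(1 - chi u y) * (\<Sum>d\<in>UNIV. chi u d) = 0"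
    by (simp add: algebra_simps)
  then show ?thesis
    using False y by (simp add: chi_mult_cnj u_def)
qed

end

section \<open>The states and the measurement as Gram matrices\<close>

definition hatPhiv_at :: "(nat \<Rightarrow> 'a::ab_group_add \<Rightarrow> 'a) \<Rightarrow> nat \<Rightarrow> (nat \<Rightarrow> 'a) \<times> (nat \<Rightarrow> nat) \<Rightarrow> 'a" where
  "hatPhiv_at Phihat k a = hatPhiv Phihat k (snd a) (fst a)"

definition cell :: "(nat \<Rightarrow> 'a::ab_group_add \<Rightarrow> 'a) \<Rightarrow> nat \<Rightarrow> (nat \<Rightarrow> 'a) \<times> (nat \<Rightarrow> nat) \<Rightarrow> (nat \<Rightarrow> 'a) \<times> 'a" where
  "cell Phihat k a = (fst a, hatPhiv_at Phihat k a)"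

definition state_vec :: "('a \<Rightarrow> 'a \<Rightarrow> complex) \<Rightarrow> (nat \<Rightarrow> 'a::ab_group_add \<Rightarrow> 'a) \<Rightarrow> nat
    \<Rightarrow> (nat \<Rightarrow> 'a) \<Rightarrow> 'a \<Rightarrow> (nat \<Rightarrow> 'a) \<times> (nat \<Rightarrow> nat) \<Rightarrow> complex" where
  "state_vec chi Phihat k x d a = (if fst a = x then chi (hatPhiv_at Phihat k a) d else 0)"

definition meas_vec :: "('a \<Rightarrow> 'a \<Rightarrow> complex) \<Rightarrow> (nat \<Rightarrow> 'a::{finite,ab_group_add} \<Rightarrow> 'a) \<Rightarrow> nat \<Rightarrow> nat
    \<Rightarrow> (nat \<Rightarrow> 'a) \<Rightarrow> 'a \<Rightarrow> (nat \<Rightarrow> 'a) \<times> (nat \<Rightarrow> nat) \<Rightarrow> complex" where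
  "meas_vec chi Phihat p k x j a =
     state_vec chi Phihat k x j a / of_real (sqrt (real (class_card (Idx p k) (cell Phihat k) a)))"

text \<open>
  This is sum_w sqrt(eta^x_w): each of the eta^x_w basis vectors in the cell (x, w) contributes
  1 / sqrt(eta^x_w).
\<close>
definition root_sum :: "(nat \<Rightarrow> 'a::{finite,ab_group_add} \<Rightarrow> 'a) \<Rightarrow> nat \<Rightarrow> nat \<Rightarrow> (nat \<Rightarrow> 'a) \<Rightarrow> real" where
  "root_sum Phihat p k x =
     (\<Sum>a\<in>{a\<in>Idx p k. fst a = x}. 1 / sqrt (real (class_card (Idx p k) (cell Phihat k) a)))"

definition cell_vec :: "(nat \<Rightarrow> 'a::{finite,ab_group_add} \<Rightarrow> 'a) \<Rightarrow> nat \<Rightarrow> nat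
    \<Rightarrow> (nat \<Rightarrow> 'a) \<times> (nat \<Rightarrow> nat) \<Rightarrow> (nat \<Rightarrow> 'a) \<times> (nat \<Rightarrow> nat) \<Rightarrow> complex" where
  "cell_vec Phihat p k l a = (if cell Phihat k a = cell Phihat k l
     then of_real (1 / sqrt (real (class_card (Idx p k) (cell Phihat k) l))) else 0)"

lemma finite_Xs: "finite (Xs k :: (nat \<Rightarrow> 'a::finite) set)"
  unfolding Xs_def by (simp add: finite_PiE)

lemma finite_Idx: "finite (Idx p k :: ((nat \<Rightarrow> 'a::finite) \<times> (nat \<Rightarrow> nat)) set)"
  unfolding Idx_def Bs_def by (simp add: finite_Xs finite_PiE)

lemma fst_Idx: "a \<in> Idx p k \<Longrightarrow> fst a \<in> Xs k"
  unfolding Idx_def by auto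

context
  fixes Phihat :: "nat \<Rightarrow> 'a::{finite,ab_group_add} \<Rightarrow> 'a" and p k :: nat
begin

lemma eta_eq_class_card:
  assumes "a \<in> Idx p k"
  shows "eta Phihat p k (fst a) (hatPhiv_at Phihat k a) = class_card (Idx p k) (cell Phihat k) a"
proof -
  have "{l\<in>Idx p k. cell Phihat k l = cell Phihat k a} = Pair (fst a) ` Sset Phihat p k (fst a) (hatPhiv_at Phihat k a)"
    using assms unfolding Idx_def Sset_def cell_def hatPhiv_at_def by force
  then show ?thesis
    unfolding eta_def class_card_def by (simp add: card_image inj_on_def)
qed

lemma eta_pos: "a \<in> Idx p k \<Longrightarrow> 0 < eta Phihat p k (fst a) (hatPhiv_at Phihat k a)"
  by (simp add: eta_eq_class_card class_card_pos finite_Idx)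

lemma ketS_Idx:
  assumes "a \<in> Idx p k"
  shows "ketS Phihat p k x w a = (if fst a = x \<and> hatPhiv_at Phihat k a = w
           then of_real (1 / sqrt (real (eta Phihat p k x w))) else 0)"
  using assms unfolding ketS_def Sset_def Idx_def hatPhiv_at_def by (auto split: prod.splits)

lemma sum_ketS:
  assumes "a \<in> Idx p k"
  shows "(\<Sum>w\<in>UNIV. f w * ketS Phihat p k x w a)
       = (if fst a = x then f (hatPhiv_at Phihat k a) / of_real (sqrt (real (eta Phihat p k x (hatPhiv_at Phihat k a)))) else 0)"
  by (simp add: ketS_Idx[OF assms] if_distrib[of "\<lambda>z. f _ * z"] divide_inverse real_sqrt_inverse cong: if_cong)

lemma sigma_eq_gram:
  assumes "a \<in> Idx p k" "b \<in> Idx p k"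
  shows "sigma chi Phihat p k d a b = 1 / of_nat (p * CARD('a)) ^ k * gram (Xs k) (\<lambda>x. state_vec chi Phihat k x d) a b"
proof -
  have root: "(\<Sum>w\<in>UNIV. chi w d * of_real (sqrt (real (eta Phihat p k x w))) * ketS Phihat p k x w c)
      = state_vec chi Phihat k x d c" if "c \<in> Idx p k" for c x
    using eta_pos[OF that] by (cases "fst c = x") (auto simp: sum_ketS[OF that] state_vec_def)
  have "sigma chi Phihat p k d a b = 1 / of_nat (p * CARD('a)) ^ k *
     (\<Sum>x\<in>Xs k. (\<Sum>w\<in>UNIV. chi w d * of_real (sqrt (real (eta Phihat p k x w))) * ketS Phihat p k x w a)
        * cnj (\<Sum>w\<in>UNIV. chi w d * of_real (sqrt (real (eta Phihat p k x w))) * ketS Phihat p k x w b))"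
    unfolding sigma_def outer_def cnj_sum sum_product by (simp add: real_sqrt_mult mult_ac)
  then show ?thesis
    unfolding root[OF assms(1)] root[OF assms(2)] gram_def .
qed

lemma Eop_eq_gram:
  assumes "a \<in> Idx p k" "b \<in> Idx p k"
  shows "Eop chi Phihat p k j a b = of_real (1 / real CARD('a)) * gram (Xs k) (\<lambda>x. meas_vec chi Phihat p k x j) a b"
proof -
  have root: "(\<Sum>w\<in>UNIV. chi w j * ketS Phihat p k x w c) = meas_vec chi Phihat p k x j c"
    if "c \<in> Idx p k" for c x
    using eta_eq_class_card[OF that] by (cases "fst c = x") (auto simp: sum_ketS[OF that] meas_vec_def state_vec_def)
  have "Eop chi Phihat p k j a b = of_real (1 / real CARD('a)) *
     (\<Sum>x\<in>Xs k. (\<Sum>w\<in>UNIV. chi w j * ketS Phihat p k x w a) * cnj (\<Sum>w\<in>UNIV. chi w j * ketS Phihat p k x w b))"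
    unfolding Eop_def outer_def cnj_sum sum_product by (simp add: mult_ac)
  then show ?thesis
    unfolding root[OF assms(1)] root[OF assms(2)] gram_def .
qed

lemma gram_Xs_diag:
  assumes "a \<in> Idx p k"
  shows "gram (Xs k) (\<lambda>x c. if fst c = x then f c else 0) a b = (if fst a = fst b then f a * cnj (f b) else 0)"
proof -
  have "gram (Xs k) (\<lambda>x c. if fst c = x then f c else 0) a b
      = (\<Sum>x\<in>Xs k. if x = fst a then (if fst a = fst b then f a * cnj (f b) else 0) else 0)"
    unfolding gram_def by (intro sum.cong refl) auto
  also have "\<dots> = (if fst a = fst b then f a * cnj (f b) else 0)"
    by (simp only: sum.delta[OF finite_Xs] fst_Idx[OF assms] if_True)
  finally show ?thesis .
qed

lemma norm_cell_vec:
  assumes l: "l \<in> Idx p k"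
  shows "(\<Sum>a\<in>Idx p k. (cmod (cell_vec Phihat p k l a))\<^sup>2) = 1"
proof -
  define \<eta> where "\<eta> = real (class_card (Idx p k) (cell Phihat k) l)"
  have \<eta>_pos: "0 < \<eta>"
    using class_card_pos[OF finite_Idx l] by (simp add: \<eta>_def)
  have "(\<Sum>a\<in>Idx p k. (cmod (cell_vec Phihat p k l a))\<^sup>2) = (\<Sum>a\<in>{a\<in>Idx p k. cell Phihat k a = cell Phihat k l}. 1 / \<eta>)"
    unfolding cell_vec_def sum.inter_filter[OF finite_Idx] \<eta>_def[symmetric] using \<eta>_pos
    by (intro sum.cong refl) (simp add: norm_divide power_divide)
  also have "\<dots> = 1"
    using \<eta>_pos by (simp add: \<eta>_def class_card_def)
  finally show ?thesis .
qed

lemma state_vec_cell_expansion: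
  assumes a: "a \<in> Idx p k"
  shows "state_vec chi Phihat k x j a = (\<Sum>l\<in>{l\<in>Idx p k. fst l = x}.
     of_real (1 / sqrt (real (class_card (Idx p k) (cell Phihat k) l))) * (chi (hatPhiv_at Phihat k l) j * cell_vec Phihat p k l a))"
proof -
  let ?I = "Idx p k" and ?cell = "cell Phihat k" and ?w = "hatPhiv_at Phihat k"
  define \<eta> where "\<eta> c = real (class_card ?I ?cell c)" for c
  have \<eta>_pos: "0 < \<eta> c" if "c \<in> ?I" for c
    using class_card_pos[OF finite_Idx that] by (simp add: \<eta>_def)
  have "(\<Sum>l\<in>{l\<in>?I. fst l = x}. of_real (1 / sqrt (\<eta> l)) * (chi (?w l) j * cell_vec Phihat p k l a))
      = (\<Sum>l\<in>{l\<in>?I. fst l = x}. if ?cell l = ?cell a then chi (?w a) j / of_real (\<eta> a) else 0)"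
  proof (intro sum.cong refl)
    fix l assume "l \<in> {l\<in>?I. fst l = x}"
    then have "0 < \<eta> l" using \<eta>_pos by blast
    moreover have "?w l = ?w a \<and> \<eta> l = \<eta> a" if "?cell l = ?cell a"
      using that class_card_cong[of ?cell l a ?I] by (simp add: cell_def \<eta>_def)
    ultimately show "of_real (1 / sqrt (\<eta> l)) * (chi (?w l) j * cell_vec Phihat p k l a)
        = (if ?cell l = ?cell a then chi (?w a) j / of_real (\<eta> a) else 0)"
      by (auto simp: cell_vec_def \<eta>_def[symmetric] field_simps simp flip: of_real_mult)
  qed
  also have "\<dots> = (\<Sum>l\<in>{l\<in>?I. ?cell l = ?cell a}. if fst a = x then chi (?w a) j / of_real (\<eta> a) else 0)"
    unfolding sum.inter_filter[OF finite_Idx] by (intro sum.cong refl) (auto simp: cell_def)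
  also have "\<dots> = state_vec chi Phihat k x j a"
    using \<eta>_pos[OF a] by (simp add: state_vec_def \<eta>_def class_card_def)
  finally show ?thesis by (simp add: \<eta>_def)
qed

lemma psd_Eop: "psd (Idx p k) (Eop chi Phihat p k j)"
  by (rule psd_scaled_gram[OF finite_Idx _ Eop_eq_gram]) simp_all

lemma avg_success_eq:
  "avg_success chi Phihat p k F = (\<Sum>x\<in>Xs k. \<Sum>j\<in>UNIV.
     Re (sesq (Idx p k) (F j) (state_vec chi Phihat k x j) (state_vec chi Phihat k x j)))
     / (real CARD('a) * real (p * CARD('a)) ^ k)"
proof -
  have "mtrace (Idx p k) (mmul (Idx p k) (F j) (sigma chi Phihat p k j))
      = 1 / of_nat (p * CARD('a)) ^ k * (\<Sum>x\<in>Xs k. sesq (Idx p k) (F j) (state_vec chi Phihat k x j) (state_vec chi Phihat k x j))"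
    for j by (rule mtrace_mmul_scaled_gram) (rule sigma_eq_gram)
  then show ?thesis
    unfolding avg_success_def
    by (simp add: sum_divide_distrib sum.swap[of _ "Xs k"] divide_simps mult_ac)
qed

end

section \<open>The measurement E + G and its optimality\<close>

context
  fixes chi :: "'a::{finite,ab_group_add} \<Rightarrow> 'a \<Rightarrow> complex" and Phihat :: "nat \<Rightarrow> 'a \<Rightarrow> 'a" and p k :: nat
  assumes chars: "bij_betw chi UNIV {f. character f}"
    and chi_mult: "\<And>x x' y. chi x y * chi x' y = chi (x + x') y"
    and chi_sym: "\<And>x y. chi x y = chi y x"
begin

lemma sum_sigma_block:
  assumes "a \<in> Idx p k" "b \<in> Idx p k"
  shows "(\<Sum>d\<in>UNIV. sigma chi Phihat p k d a b)
       = (if cell Phihat k a = cell Phihat k b then of_nat CARD('a) / of_nat (p * CARD('a)) ^ k else 0)"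
proof -
  have "(\<Sum>d\<in>UNIV. sigma chi Phihat p k d a b) = 1 / of_nat (p * CARD('a)) ^ k *
      (if fst a = fst b then (\<Sum>d\<in>UNIV. chi (hatPhiv_at Phihat k a) d * cnj (chi (hatPhiv_at Phihat k b) d)) else 0)"
    unfolding sigma_eq_gram[OF assms] state_vec_def gram_Xs_diag[OF assms(1)] sum_distrib_left
    by (simp add: if_distrib[of "\<lambda>z. _ * z"] sum_divide_distrib cong: if_cong)
  then show ?thesis
    by (simp add: chi_orthogonality[OF chars chi_mult chi_sym] cell_def)
qed

lemma sum_Eop_block:
  assumes "a \<in> Idx p k" "b \<in> Idx p k"
  shows "(\<Sum>j\<in>UNIV. Eop chi Phihat p k j a b)
       = (if cell Phihat k a = cell Phihat k b then 1 / of_nat (class_card (Idx p k) (cell Phihat k) a) else 0)"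
proof -
  define \<eta> where "\<eta> c = real (class_card (Idx p k) (cell Phihat k) c)" for c
  have "(\<Sum>j\<in>UNIV. Eop chi Phihat p k j a b) = of_real (1 / real CARD('a)) *
      (if fst a = fst b then (\<Sum>j\<in>UNIV. chi (hatPhiv_at Phihat k a) j * cnj (chi (hatPhiv_at Phihat k b) j))
         / (of_real (sqrt (\<eta> a)) * of_real (sqrt (\<eta> b))) else 0)"
    unfolding Eop_eq_gram[OF assms] meas_vec_def state_vec_def if_distrib[of "\<lambda>z. z / _"] div_0
      gram_Xs_diag[OF assms(1)] sum_distrib_left \<eta>_def
    by (simp add: if_distrib[of "\<lambda>z. _ * z"] sum_divide_distrib mult_ac cong: if_cong)
  also have "\<dots> = (if cell Phihat k a = cell Phihat k b then 1 / of_real (\<eta> a) else 0)"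
  proof (cases "cell Phihat k a = cell Phihat k b")
    case True
    have "\<eta> b = \<eta> a"
      unfolding \<eta>_def using class_card_cong[of "cell Phihat k" a b "Idx p k"] True by simp
    moreover have "0 < \<eta> a"
      unfolding \<eta>_def using class_card_pos[OF finite_Idx assms(1)] by simp
    ultimately show ?thesis
      using True by (simp add: chi_orthogonality[OF chars chi_mult chi_sym] cell_def flip: of_real_mult)
  next
    case False
    then show ?thesis
      by (auto simp: chi_orthogonality[OF chars chi_mult chi_sym] cell_def)
  qed
  finally show ?thesis
    by (simp add: \<eta>_def)
qed

lemma povm_Eop_plus:
  assumes p_pos: "0 < p"
    and Q: "proj_onto_kernel (Idx p k) (\<lambda>a b. \<Sum>d\<in>UNIV. sigma chi Phihat p k d a b) Q"
    and G_psd: "\<And>j. psd (Idx p k) (G j)"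
    and G_sum: "\<And>a b. a \<in> Idx p k \<Longrightarrow> b \<in> Idx p k \<Longrightarrow> (\<Sum>j\<in>UNIV. G j a b) = Q a b"
  shows "povm (Idx p k) UNIV (\<lambda>j a b. Eop chi Phihat p k j a b + G j a b)"
  unfolding povm_def
proof (intro conjI ballI)
  show "psd (Idx p k) (\<lambda>a b. Eop chi Phihat p k j a b + G j a b)" for j
    by (rule psd_add[OF psd_Eop G_psd])
  fix a b :: "(nat \<Rightarrow> 'a) \<times> (nat \<Rightarrow> nat)"
  assume a: "a \<in> Idx p k" and b: "b \<in> Idx p k"
  have "Q a b = (if a = b then 1 else 0)
      - (if cell Phihat k a = cell Phihat k b then 1 / of_nat (class_card (Idx p k) (cell Phihat k) b) else 0)"
    using p_pos by (intro proj_onto_kernel_block[OF finite_Idx sum_sigma_block _ Q a b]) simp_all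
  then show "(\<Sum>j\<in>UNIV. Eop chi Phihat p k j a b + G j a b) = (if a = b then 1 else 0)"
    using class_card_cong[of "cell Phihat k" a b "Idx p k"]
    by (simp add: sum.distrib sum_Eop_block[OF a b] G_sum[OF a b])
qed

lemma povm_state_vec_le:
  assumes povm: "povm (Idx p k) UNIV F"
  shows "(\<Sum>j\<in>UNIV. Re (sesq (Idx p k) (F j) (state_vec chi Phihat k x j) (state_vec chi Phihat k x j)))
       \<le> (root_sum Phihat p k x)\<^sup>2"
  unfolding root_sum_def
  by (rule povm_superposition_bound[where c="\<lambda>j l. chi (hatPhiv_at Phihat k l) j" and r="cell_vec Phihat p k",
        OF povm finite_Idx])
    (auto simp: norm_chi[OF chars chi_mult chi_sym] norm_cell_vec state_vec_cell_expansion)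

lemma Eop_plus_state_vec_eq:
  assumes p_pos: "0 < p" and x: "x \<in> Xs k"
    and G_supp: "\<And>j a b. a \<in> Idx p k \<Longrightarrow> b \<in> Idx p k \<Longrightarrow>
        mmul (Idx p k) (\<lambda>a b. \<Sum>d\<in>UNIV. sigma chi Phihat p k d a b) (G j) a b = 0"
  shows "(\<Sum>j\<in>UNIV. Re (sesq (Idx p k) (\<lambda>a b. Eop chi Phihat p k j a b + G j a b)
            (state_vec chi Phihat k x j) (state_vec chi Phihat k x j)))
       = (root_sum Phihat p k x)\<^sup>2"
proof -
  let ?I = "Idx p k" and ?g = "state_vec chi Phihat k x"
  have G: "sesq ?I (G j) (?g j) (?g j) = 0" for j
    using p_pos
    by (intro sesq_kernel_class_const[OF finite_Idx sum_sigma_block _ G_supp]) (auto simp: state_vec_def cell_def)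
  have overlap: "(\<Sum>a\<in>?I. cnj (?g j a) * meas_vec chi Phihat p k y j a)
      = (if y = x then of_real (root_sum Phihat p k x) else 0)" for j y
  proof -
    have "(\<Sum>a\<in>?I. cnj (?g j a) * meas_vec chi Phihat p k y j a)
        = (\<Sum>a\<in>?I. if y = x then (if fst a = x then of_real (1 / sqrt (real (class_card ?I (cell Phihat k) a))) else 0) else 0)"
      by (intro sum.cong refl)
        (auto simp: state_vec_def meas_vec_def mult.assoc[symmetric] cnj_chi_mult_self[OF chars chi_mult chi_sym])
    also have "\<dots> = (if y = x then of_real (root_sum Phihat p k x) else 0)"
      unfolding root_sum_def of_real_sum sum.inter_filter[OF finite_Idx]
      by (simp add: if_distrib[of complex_of_real] cong: if_cong)
    finally show ?thesis .
  qed
  have E: "sesq ?I (Eop chi Phihat p k j) (?g j) (?g j) = of_real ((root_sum Phihat p k x)\<^sup>2 / real CARD('a))" for j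
  proof -
    have "(\<Sum>y\<in>Xs k. (cmod (if y = x then of_real (root_sum Phihat p k x) else 0))\<^sup>2)
        = (\<Sum>y\<in>Xs k. if y = x then (root_sum Phihat p k x)\<^sup>2 else 0)"
      by (intro sum.cong refl) simp
    also have "\<dots> = (root_sum Phihat p k x)\<^sup>2"
      by (simp only: sum.delta[OF finite_Xs] x if_True)
    finally show ?thesis
      by (simp add: sesq_scaled_gram[OF finite_Idx Eop_eq_gram] overlap)
  qed
  show ?thesis
    by (simp add: sesq_add_matrix E G)
qed

lemma avg_success_le_Eop_plus:
  assumes p_pos: "0 < p"
    and G_supp: "\<And>j a b. a \<in> Idx p k \<Longrightarrow> b \<in> Idx p k \<Longrightarrow>
        mmul (Idx p k) (\<lambda>a b. \<Sum>d\<in>UNIV. sigma chi Phihat p k d a b) (G j) a b = 0"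
    and F: "povm (Idx p k) UNIV F"
  shows "avg_success chi Phihat p k F \<le> avg_success chi Phihat p k (\<lambda>j a b. Eop chi Phihat p k j a b + G j a b)"
proof -
  have "(\<Sum>j\<in>UNIV. Re (sesq (Idx p k) (F j) (state_vec chi Phihat k x j) (state_vec chi Phihat k x j)))
      \<le> (\<Sum>j\<in>UNIV. Re (sesq (Idx p k) (\<lambda>a b. Eop chi Phihat p k j a b + G j a b)
              (state_vec chi Phihat k x j) (state_vec chi Phihat k x j)))"
    if x: "x \<in> Xs k" for x
    using povm_state_vec_le[OF F, of x] Eop_plus_state_vec_eq[OF p_pos x, where G=G, OF G_supp] by simp
  then have "(\<Sum>x\<in>Xs k. \<Sum>j\<in>UNIV. Re (sesq (Idx p k) (F j) (state_vec chi Phihat k x j) (state_vec chi Phihat k x j)))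
      \<le> (\<Sum>x\<in>Xs k. \<Sum>j\<in>UNIV. Re (sesq (Idx p k) (\<lambda>a b. Eop chi Phihat p k j a b + G j a b)
              (state_vec chi Phihat k x j) (state_vec chi Phihat k x j)))"
    by (rule sum_mono)
  then show ?thesis
    unfolding avg_success_eq by (simp add: divide_right_mono)
qed

end

theorem mainTheorem7:
  fixes chi :: "'a::{finite,ab_group_add} \<Rightarrow> 'a \<Rightarrow> complex"
    and phi :: "'a \<Rightarrow> 'a"
    and Phihat :: "nat \<Rightarrow> 'a \<Rightarrow> 'a"
    and p k :: nat
    and Q :: "((nat \<Rightarrow> 'a) \<times> (nat \<Rightarrow> nat)) \<Rightarrow> ((nat \<Rightarrow> 'a) \<times> (nat \<Rightarrow> nat)) \<Rightarrow> complex"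
    and G :: "'a \<Rightarrow> ((nat \<Rightarrow> 'a) \<times> (nat \<Rightarrow> nat)) \<Rightarrow> ((nat \<Rightarrow> 'a) \<times> (nat \<Rightarrow> nat)) \<Rightarrow> complex"
  assumes p_prime: "prime p"
    and chars: "bij_betw chi UNIV {f. character f}"
    and chi_mult: "\<And>x x' y. chi x y * chi x' y = chi (x + x') y"
    and chi_sym: "\<And>x y. chi x y = chi y x"
    and phi_bij: "bij phi"
    and phi_hom: "\<And>a b. phi (a + b) = phi a + phi b"
    and phi_order: "phi ^^ p = id"
    and Phihat_def: "\<And>b x d. b < p \<Longrightarrow> chi x (Phi phi b d) = chi (Phihat b x) d"
    and k_pos: "k \<ge> 1"
    and Q_proj: "proj_onto_kernel (Idx p k) (\<lambda>a b. \<Sum>d\<in>UNIV. sigma chi Phihat p k d a b) Q"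
    and G_psd: "\<And>j. psd (Idx p k) (G j)"
    and G_supp: "\<And>j a b. a \<in> Idx p k \<Longrightarrow> b \<in> Idx p k \<Longrightarrow>
        mmul (Idx p k) (\<lambda>a b. \<Sum>d\<in>UNIV. sigma chi Phihat p k d a b) (G j) a b = 0"
    and G_sum: "\<And>a b. a \<in> Idx p k \<Longrightarrow> b \<in> Idx p k \<Longrightarrow> (\<Sum>j\<in>UNIV. G j a b) = Q a b"
  shows "povm (Idx p k) UNIV (\<lambda>j a b. Eop chi Phihat p k j a b + G j a b)
       \<and> (\<forall>F. povm (Idx p k) UNIV F \<longrightarrow>
              avg_success chi Phihat p k F
                \<le> avg_success chi Phihat p k (\<lambda>j a b. Eop chi Phihat p k j a b + G j a b))"
proof -
  have p_pos: "0 < p"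
    using p_prime prime_gt_0_nat by blast
  show ?thesis
  proof (intro conjI allI impI)
    show "povm (Idx p k) UNIV (\<lambda>j a b. Eop chi Phihat p k j a b + G j a b)"
      using p_pos Q_proj G_psd G_sum by (rule povm_Eop_plus[OF chars chi_mult chi_sym])
    show "avg_success chi Phihat p k F
        \<le> avg_success chi Phihat p k (\<lambda>j a b. Eop chi Phihat p k j a b + G j a b)"
      if "povm (Idx p k) UNIV F" for F
      using p_pos G_supp that by (rule avg_success_le_Eop_plus[OF chars chi_mult chi_sym])
  qed
qed

end
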